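(* Let $(V,g)$ be a four-dimensional Lorentzian vector space (signature $(-,+,+,+)$) with a choice of time orientation, and let $F\in\mathrm{Skew}(V)$, $F\neq 0$. Define $\sigma:=-\frac12\mathrm{Tr}(F^2)\in\mathbb{R}$ and $\tau\geq 0$ by $\tau^2:=-4\det F$. Then there exists an orthonormal basis $\{e_0,e_1,e_2,e_3\}$ of $V$ with $e_0$ timelike and future directed such that $$F(e_0)=\left(-1+\tfrac{\sigma}{4}\right)e_2+\tfrac{\tau}{4}e_3,\quad F(e_1)=\left(1+\tfrac{\sigma}{4}\right)e_2+\tfrac{\tau}{4}e_3,$$ $$F(e_2)=\left(-1+\tfrac{\sigma}{4}\right)e_0-\left(1+\tfrac{\sigma}{4}\right)e_1,\quad F(e_3)=\tfrac{\tau}{4}(e_0-e_1).$$ Moreover, if $\tau=0$, the vector $e_3$ of such a basis can be taken to be any spacelike unit vector lying in $\ker F$.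
   Context: $\mathrm{Skew}(V)$ denotes the set of endomorphisms $F:V\to V$ with $\langle e,F(e')\rangle=-\langle F(e),e'\rangle$ for all $e,e'\in V$, where $\langle\cdot,\cdot\rangle$ is the inner product of $g$. Trace and determinant are those of $F$ as an endomorphism. *)

theory Defs
  imports "HOL-Analysis.Analysis"
begin

text \<open>A four-dimensional real vector space is modelled as real^4 (every such space is
  linearly isomorphic to it); the Lorentzian metric g is an arbitrary symmetric bilinear
  form of signature (-,+,+,+).\<close>

definition g_orthonormal ::
  "(real^4 \<Rightarrow> real^4 \<Rightarrow> real) \<Rightarrow> real^4 \<Rightarrow> real^4 \<Rightarrow> real^4 \<Rightarrow> real^4 \<Rightarrow> bool" where
  "g_orthonormal g e0 e1 e2 e3 \<longleftrightarrow>
     g e0 e0 = -1 \<and> g e1 e1 = 1 \<and> g e2 e2 = 1 \<and> g e3 e3 = 1 \<and>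
     g e0 e1 = 0 \<and> g e0 e2 = 0 \<and> g e0 e3 = 0 \<and>
     g e1 e2 = 0 \<and> g e1 e3 = 0 \<and> g e2 e3 = 0"

definition lorentzian :: "(real^4 \<Rightarrow> real^4 \<Rightarrow> real) \<Rightarrow> bool" where
  "lorentzian g \<longleftrightarrow> bilinear g \<and> (\<forall>x y. g x y = g y x) \<and>
     (\<exists>b0 b1 b2 b3. g_orthonormal g b0 b1 b2 b3)"

definition skew_wrt :: "(real^4 \<Rightarrow> real^4 \<Rightarrow> real) \<Rightarrow> (real^4 \<Rightarrow> real^4) \<Rightarrow> bool" where
  "skew_wrt g F \<longleftrightarrow> linear F \<and> (\<forall>e e'. g e (F e') = - g (F e) e')"

text \<open>Time orientation given by a fixed timelike vector T; a timelike vector v is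
  future directed iff it lies in the same cone as T, i.e. g v T < 0.\<close>
definition future_directed :: "(real^4 \<Rightarrow> real^4 \<Rightarrow> real) \<Rightarrow> real^4 \<Rightarrow> real^4 \<Rightarrow> bool" where
  "future_directed g T v \<longleftrightarrow> g v v < 0 \<and> g v T < 0"

definition normal_form_basis ::
  "(real^4 \<Rightarrow> real^4 \<Rightarrow> real) \<Rightarrow> real^4 \<Rightarrow> (real^4 \<Rightarrow> real^4) \<Rightarrow> real \<Rightarrow> real \<Rightarrow>
   real^4 \<Rightarrow> real^4 \<Rightarrow> real^4 \<Rightarrow> real^4 \<Rightarrow> bool" where
  "normal_form_basis g T F \<sigma> \<tau> e0 e1 e2 e3 \<longleftrightarrow>
     g_orthonormal g e0 e1 e2 e3 \<and> future_directed g T e0 \<and>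
     F e0 = (-1 + \<sigma>/4) *\<^sub>R e2 + (\<tau>/4) *\<^sub>R e3 \<and>
     F e1 = (1 + \<sigma>/4) *\<^sub>R e2 + (\<tau>/4) *\<^sub>R e3 \<and>
     F e2 = (-1 + \<sigma>/4) *\<^sub>R e0 - (1 + \<sigma>/4) *\<^sub>R e1 \<and>
     F e3 = (\<tau>/4) *\<^sub>R (e0 - e1)"

end

theory Submission
  imports Defs
begin

text \<open>
  In a g-orthonormal frame c0, c1, c2, c3 a g-skew map F has a matrix of the special form
  lorentz_skew_matrix, for which Cayley-Hamilton is an explicit computation; with
  det F = -tau^2/4 it reads F^4 = (tau^2/4) id - sigma F^2.

  There is a null vector k with g(Fk, Fk) = 4: for a null vector n the image Fn is orthogonal to n,
  so g(Fn, Fn) is a sum of squares of matrix entries, and if this vanished for the four null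
  vectors c0 +- c1 and c0 +- c2, all entries of the matrix, hence F, would vanish.

  The quartic identity fixes the Gram matrix of k, Fk, F^2k, F^3k in terms of sigma and tau, and then
  e0 = (1/2 + sigma/8) k + F^2k/4, e1 = (sigma/8 - 1/2) k + F^2k/4, e2 = -Fk/2 and
  e3 = (F^3k + sigma Fk)/tau form the required basis. If tau = 0, then F^3k + sigma Fk is a null
  vector orthogonal to e0, e1, e2, hence zero, and any unit vector orthogonal to k, Fk, F^2k can
  serve as e3; a unit vector u in ker F qualifies once k is chosen orthogonal to u. Replacing k
  by -k reverses e0, which takes care of the time orientation.
\<close>

section \<open>Four-by-four matrices\<close>

lemma det_4:
  "det (A::'a::comm_ring_1^4^4) =
    A$1$1 * A$2$2 * A$3$3 * A$4$4 - A$1$1 * A$2$2 * A$3$4 * A$4$3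
  - A$1$1 * A$2$3 * A$3$2 * A$4$4 + A$1$1 * A$2$3 * A$3$4 * A$4$2
  + A$1$1 * A$2$4 * A$3$2 * A$4$3 - A$1$1 * A$2$4 * A$3$3 * A$4$2
  - A$1$2 * A$2$1 * A$3$3 * A$4$4 + A$1$2 * A$2$1 * A$3$4 * A$4$3
  + A$1$2 * A$2$3 * A$3$1 * A$4$4 - A$1$2 * A$2$3 * A$3$4 * A$4$1
  - A$1$2 * A$2$4 * A$3$1 * A$4$3 + A$1$2 * A$2$4 * A$3$3 * A$4$1
  + A$1$3 * A$2$1 * A$3$2 * A$4$4 - A$1$3 * A$2$1 * A$3$4 * A$4$2
  - A$1$3 * A$2$2 * A$3$1 * A$4$4 + A$1$3 * A$2$2 * A$3$4 * A$4$1
  + A$1$3 * A$2$4 * A$3$1 * A$4$2 - A$1$3 * A$2$4 * A$3$2 * A$4$1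
  - A$1$4 * A$2$1 * A$3$2 * A$4$3 + A$1$4 * A$2$1 * A$3$3 * A$4$2
  + A$1$4 * A$2$2 * A$3$1 * A$4$3 - A$1$4 * A$2$2 * A$3$3 * A$4$1
  - A$1$4 * A$2$3 * A$3$1 * A$4$2 + A$1$4 * A$2$3 * A$3$2 * A$4$1"
proof -
  have "finite {2::4, 3, 4}" "1 \<notin> {2::4, 3, 4}"
    and "finite {3::4, 4}" "2 \<notin> {3::4, 4}"
    and "finite {4::4}" "3 \<notin> {4::4}"
    by auto
  note expand = sum_over_permutations_insert[OF this(1,2)] sum_over_permutations_insert[OF this(3,4)]
    sum_over_permutations_insert[OF this(5,6)]
  show ?thesis
    unfolding det_def UNIV_4 expand permutes_sing
    by (simp add: sign_compose permutation_compose permutation_swap_id sign_swap_id sign_id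
        swap_id_eq algebra_simps)
qed

lemma det_conjugate:
  fixes A B M :: "'a::comm_ring_1^'n^'n"
  assumes "B ** A = mat 1"
  shows "det (A ** M ** B) = det M"
proof -
  have "det (A ** M ** B) = det (B ** A) * det M"
    by (simp add: det_mul mult_ac)
  then show ?thesis
    by (simp add: assms)
qed

lemma trace_conjugate:
  fixes A B M :: "'a::comm_ring_1^'n^'n"
  assumes "B ** A = mat 1"
  shows "trace (A ** M ** B) = trace M"
proof -
  have "trace (A ** M ** B) = trace (M ** B ** A)"
    by (metis trace_mul_sym matrix_mul_assoc)
  also have "\<dots> = trace M"
    by (simp add: assms matrix_mul_assoc[symmetric])
  finally show ?thesis .
qed

lemma vector_4 [simp]:
  "(vector [x, y, z, w] :: 'a::zero^4) $ 1 = x"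
  "(vector [x, y, z, w] :: 'a::zero^4) $ 2 = y"
  "(vector [x, y, z, w] :: 'a::zero^4) $ 3 = z"
  "(vector [x, y, z, w] :: 'a::zero^4) $ 4 = w"
  unfolding vector_def by simp_all

text \<open>The matrix of a g-skew map acting on the coordinates frame_coords of a g-orthonormal frame.\<close>

definition lorentz_skew_matrix :: "real \<Rightarrow> real \<Rightarrow> real \<Rightarrow> real \<Rightarrow> real \<Rightarrow> real \<Rightarrow> real^4^4" where
  "lorentz_skew_matrix a b c d e f =
     vector [vector [0, -a, -b, -c], vector [-a, 0, d, e], vector [-b, -d, 0, f], vector [-c, -e, -f, 0]]"

lemma lorentz_skew_matrix_quartic:
  fixes A :: "real^4^4"
  assumes "A = lorentz_skew_matrix a b c d e f"
  shows "A ** A ** A ** A + (-(1/2) * trace (A ** A)) *\<^sub>R (A ** A) + det A *\<^sub>R mat 1 = 0"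
proof -
  define B where "B = (vector [vector [a*a+b*b+c*c, b*d+c*e, c*f-a*d, -a*e-b*f],
     vector [-b*d-c*e, a*a-d*d-e*e, a*b-e*f, a*c+d*f],
     vector [a*d-c*f, a*b-e*f, b*b-d*d-f*f, b*c-d*e],
     vector [a*e+b*f, a*c+d*f, b*c-d*e, c*c-e*e-f*f]] :: real^4^4)"
  have square: "A ** A = B"
    unfolding vec_eq_iff forall_4
    by (simp add: assms lorentz_skew_matrix_def B_def matrix_matrix_mult_def sum_4 algebra_simps)
  have trace: "trace (A ** A) = 2 * (a*a + b*b + c*c - d*d - e*e - f*f)"
    by (simp add: square B_def trace_def sum_4)
  have det: "det A = - (a*f - b*e + c*d)\<^sup>2"
    by (simp add: assms lorentz_skew_matrix_def det_4 power2_eq_square algebra_simps)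
  have fourth: "A ** A ** A ** A = B ** B"
    by (metis square matrix_mul_assoc)
  show ?thesis
    unfolding fourth trace det
    unfolding square vec_eq_iff forall_4
    by (simp add: B_def matrix_matrix_mult_def sum_4 mat_def power2_eq_square algebra_simps)
qed

section \<open>Orthonormal frames of a Lorentzian form\<close>

definition frame_combination :: "real^4 \<Rightarrow> real^4 \<Rightarrow> real^4 \<Rightarrow> real^4 \<Rightarrow> real^4 \<Rightarrow> real^4" where
  "frame_combination c0 c1 c2 c3 \<xi> = \<xi>$1 *\<^sub>R c0 + \<xi>$2 *\<^sub>R c1 + \<xi>$3 *\<^sub>R c2 + \<xi>$4 *\<^sub>R c3"

lemma linear_frame_combination: "linear (frame_combination c0 c1 c2 c3)"
  unfolding frame_combination_def by (intro linearI) (auto simp: algebra_simps)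

locale symmetric_bilinear =
  fixes g :: "real^4 \<Rightarrow> real^4 \<Rightarrow> real"
  assumes bilinear_g: "bilinear g" and g_commute: "g x y = g y x"
begin

lemmas bilinear_simps = bilinear_ladd[OF bilinear_g] bilinear_radd[OF bilinear_g]
  bilinear_lmul[OF bilinear_g] bilinear_rmul[OF bilinear_g] bilinear_lneg[OF bilinear_g]
  bilinear_rneg[OF bilinear_g] bilinear_lsub[OF bilinear_g] bilinear_rsub[OF bilinear_g]
  bilinear_lzero[OF bilinear_g] bilinear_rzero[OF bilinear_g]

lemma orthonormal_values:
  assumes "g_orthonormal g e0 e1 e2 e3"
  shows "g e0 e0 = -1" "g e1 e1 = 1" "g e2 e2 = 1" "g e3 e3 = 1"
    "g e0 e1 = 0" "g e0 e2 = 0" "g e0 e3 = 0" "g e1 e2 = 0" "g e1 e3 = 0" "g e2 e3 = 0"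
    "g e1 e0 = 0" "g e2 e0 = 0" "g e3 e0 = 0" "g e2 e1 = 0" "g e3 e1 = 0" "g e3 e2 = 0"
  using assms g_commute unfolding g_orthonormal_def by metis+

definition frame_coords :: "real^4 \<Rightarrow> real^4 \<Rightarrow> real^4 \<Rightarrow> real^4 \<Rightarrow> real^4 \<Rightarrow> real^4" where
  "frame_coords c0 c1 c2 c3 x = vector [- g x c0, g x c1, g x c2, g x c3]"

lemma linear_frame_coords: "linear (frame_coords c0 c1 c2 c3)"
  unfolding frame_coords_def
  by (intro linearI) (auto simp: vec_eq_iff forall_4 bilinear_simps)

lemma frame_coords_combination:
  assumes "g_orthonormal g c0 c1 c2 c3"
  shows "frame_coords c0 c1 c2 c3 (frame_combination c0 c1 c2 c3 \<xi>) = \<xi>"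
  unfolding vec_eq_iff forall_4
  by (simp add: frame_coords_def frame_combination_def bilinear_simps orthonormal_values[OF assms])

lemma frame_combination_coords:
  assumes frame: "g_orthonormal g c0 c1 c2 c3"
  shows "frame_combination c0 c1 c2 c3 (frame_coords c0 c1 c2 c3 x) = x"
proof -
  have "inj (frame_combination c0 c1 c2 c3)"
    by (metis frame_coords_combination[OF frame] injI)
  then have "surj (frame_combination c0 c1 c2 c3)"
    using linear_frame_combination linear_injective_imp_surjective by blast
  then obtain \<xi> where "x = frame_combination c0 c1 c2 c3 \<xi>"
    by blast
  then show ?thesis
    by (simp add: frame_coords_combination[OF frame])
qed

lemma frame_expansion:
  assumes "g_orthonormal g c0 c1 c2 c3"
  shows "x = (- g x c0) *\<^sub>R c0 + g x c1 *\<^sub>R c1 + g x c2 *\<^sub>R c2 + g x c3 *\<^sub>R c3"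
  using frame_combination_coords[OF assms, of x]
  by (simp add: frame_combination_def frame_coords_def)

lemma g_frame_expansion:
  assumes frame: "g_orthonormal g c0 c1 c2 c3"
  shows "g x y = - g x c0 * g y c0 + g x c1 * g y c1 + g x c2 * g y c2 + g x c3 * g y c3"
proof -
  have "g x y = g ((- g x c0) *\<^sub>R c0 + g x c1 *\<^sub>R c1 + g x c2 *\<^sub>R c2 + g x c3 *\<^sub>R c3) y"
    using frame_expansion[OF frame] by metis
  then show ?thesis
    by (simp add: bilinear_simps g_commute[of _ y])
qed

lemma orthogonal_to_frame_eq_0:
  assumes "g_orthonormal g c0 c1 c2 c3"
    and "g x c0 = 0" "g x c1 = 0" "g x c2 = 0" "g x c3 = 0"
  shows "x = 0"
  using frame_expansion[OF assms(1), of x] assms(2-) by simp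

lemma exists_nonzero_orthogonal: "\<exists>x. x \<noteq> 0 \<and> g x v1 = 0 \<and> g x v2 = 0 \<and> g x v3 = 0"
proof -
  define h where "h x = (vector [g x v1, g x v2, g x v3, 0] :: real^4)" for x
  have "linear h"
    unfolding h_def by (intro linearI) (auto simp: vec_eq_iff forall_4 bilinear_simps)
  moreover have "\<not> surj h"
    by (metis h_def surjD vector_4(4) zero_neq_one)
  ultimately have "\<not> inj h"
    using linear_injective_imp_surjective by blast
  then obtain x y where "x \<noteq> y" "h x = h y"
    unfolding inj_def by blast
  then have "x - y \<noteq> 0" "g (x - y) v1 = 0" "g (x - y) v2 = 0" "g (x - y) v3 = 0"
    by (auto simp: h_def vec_eq_iff forall_4 bilinear_simps)
  then show ?thesis
    by blast
qed

end

lemma reverse_cauchy_schwarz: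
  fixes x h :: "'a::real_inner"
  assumes timelike: "norm h < \<bar>h0\<bar>" and orth: "x0 * h0 = inner x h" and nonzero: "x0 \<noteq> 0 \<or> x \<noteq> 0"
  shows "\<bar>x0\<bar> < norm x"
proof -
  have "h0 \<noteq> 0"
    using timelike norm_ge_zero[of h] by linarith
  with orth nonzero have "x \<noteq> 0"
    by auto
  have "\<bar>x0\<bar> * \<bar>h0\<bar> = \<bar>inner x h\<bar>"
    by (simp add: orth[symmetric] abs_mult)
  also have "\<dots> \<le> norm x * norm h"
    by (rule Cauchy_Schwarz_ineq2)
  also have "\<dots> < norm x * \<bar>h0\<bar>"
    using \<open>x \<noteq> 0\<close> timelike by simp
  finally show ?thesis
    by (simp add: mult_less_cancel_right)
qed

locale lorentzian_space = symmetric_bilinear +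
  assumes exists_orthonormal_frame: "\<exists>b0 b1 b2 b3. g_orthonormal g b0 b1 b2 b3"
begin

lemma orthogonal_timelike_imp_spacelike:
  assumes timelike: "g t t < 0" and orth: "g x t = 0" and "x \<noteq> 0"
  shows "g x x > 0"
proof -
  obtain b0 b1 b2 b3 where frame: "g_orthonormal g b0 b1 b2 b3"
    using exists_orthonormal_frame by blast
  define spatial where "spatial y = (vector [g y b1, g y b2, g y b3] :: real^3)" for y
  have inner_spatial: "inner (spatial y) (spatial z) = g y b1 * g z b1 + g y b2 * g z b2 + g y b3 * g z b3"
    for y z by (simp add: spatial_def inner_vec_def sum_3)
  have g_split: "g y z = - g y b0 * g z b0 + inner (spatial y) (spatial z)" for y z
    using g_frame_expansion[OF frame, of y z] by (simp add: inner_spatial)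
  have "(norm (spatial t))\<^sup>2 < (g t b0)\<^sup>2"
    unfolding power2_norm_eq_inner using timelike g_split[of t t] by (simp add: power2_eq_square)
  then have "norm (spatial t) < \<bar>g t b0\<bar>"
    by (metis abs_le_square_iff abs_norm_cancel not_le)
  moreover have "g x b0 * g t b0 = inner (spatial x) (spatial t)"
    using orth g_split[of x t] by simp
  moreover have "g x b0 \<noteq> 0 \<or> spatial x \<noteq> 0"
    using orthogonal_to_frame_eq_0[OF frame, of x] \<open>x \<noteq> 0\<close>
    by (auto simp: spatial_def vec_eq_iff forall_3)
  ultimately have "\<bar>g x b0\<bar> < norm (spatial x)"
    by (rule reverse_cauchy_schwarz)
  then have "(g x b0)\<^sup>2 < (norm (spatial x))\<^sup>2"
    by (metis abs_le_square_iff abs_norm_cancel not_le)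
  then show ?thesis
    using g_split[of x x] unfolding power2_norm_eq_inner by (simp add: power2_eq_square)
qed

lemma timelike_not_orthogonal:
  assumes "g t t < 0" "g s s < 0"
  shows "g s t \<noteq> 0"
  using orthogonal_timelike_imp_spacelike[OF assms(1), of s] assms(2) bilinear_simps by force

lemma unit_spacelike_extends_to_frame:
  assumes unit: "g u u = 1"
  shows "\<exists>c0 c1 c2. g_orthonormal g c0 c1 c2 u"
proof -
  obtain b0 b1 b2 b3 where frame: "g_orthonormal g b0 b1 b2 b3"
    using exists_orthonormal_frame by blast
  define t where "t = b0 - g b0 u *\<^sub>R u"
  define q where "q = 1 + (g b0 u)\<^sup>2"
  have "q > 0"
    by (simp add: q_def add_pos_nonneg)
  have "g t t = - q"
    using unit orthonormal_values[OF frame]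
    by (simp add: t_def q_def bilinear_simps g_commute[of u b0] power2_eq_square)
  moreover have "g t u = 0"
    using unit by (simp add: t_def bilinear_simps)
  ultimately obtain c0 where c0: "g c0 c0 = -1" "g c0 u = 0"
    using \<open>q > 0\<close> by (intro that[of "(1 / sqrt q) *\<^sub>R t"]) (simp_all add: bilinear_simps)
  have unit_normalisation: "\<exists>c. g c c = 1 \<and> g c c0 = 0 \<and> g c v = 0 \<and> g c u = 0"
    if "x \<noteq> 0" "g x c0 = 0" "g x v = 0" "g x u = 0" for x v
  proof -
    have "g x x > 0"
      using orthogonal_timelike_imp_spacelike[of c0 x] c0 that by simp
    then show ?thesis
      using that by (intro exI[of _ "(1 / sqrt (g x x)) *\<^sub>R x"]) (simp add: bilinear_simps)
  qed
  obtain c1 where c1: "g c1 c1 = 1" "g c1 c0 = 0" "g c1 u = 0"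
    using exists_nonzero_orthogonal[of c0 u u] unit_normalisation by blast
  obtain c2 where c2: "g c2 c2 = 1" "g c2 c0 = 0" "g c2 c1 = 0" "g c2 u = 0"
    using exists_nonzero_orthogonal[of c0 c1 u] unit_normalisation by blast
  show ?thesis
    using c0 c1 c2 unit g_commute unfolding g_orthonormal_def by metis
qed

end

section \<open>Skew maps\<close>

locale lorentz_skew = lorentzian_space +
  fixes F :: "real^4 \<Rightarrow> real^4"
  assumes skew: "skew_wrt g F"
begin

lemma linear_F: "linear F"
  using skew unfolding skew_wrt_def by blast

lemma g_F_right: "g x (F y) = - g (F x) y"
  using skew unfolding skew_wrt_def by blast

lemma g_F_swap: "g (F x) y = - g (F y) x"
  by (metis g_F_right g_commute)

lemma g_F_self: "g (F x) x = 0"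
  using g_F_swap[of x x] by simp

lemma frame_entries:
  assumes "g_orthonormal g c0 c1 c2 c3"
  shows "g (F c0) c0 = 0" "g (F c1) c1 = 0" "g (F c2) c2 = 0" "g (F c3) c3 = 0"
    "g (F c0) c1 = - g (F c1) c0" "g (F c0) c2 = - g (F c2) c0" "g (F c0) c3 = - g (F c3) c0"
    "g (F c1) c2 = - g (F c2) c1" "g (F c1) c3 = - g (F c3) c1" "g (F c2) c3 = - g (F c3) c2"
  using g_F_swap[of c0 c1] g_F_swap[of c0 c2] g_F_swap[of c0 c3] g_F_swap[of c1 c2]
    g_F_swap[of c1 c3] g_F_swap[of c2 c3]
  by (simp_all add: g_F_self)

definition frame_matrix :: "real^4 \<Rightarrow> real^4 \<Rightarrow> real^4 \<Rightarrow> real^4 \<Rightarrow> real^4^4" where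
  "frame_matrix c0 c1 c2 c3 = lorentz_skew_matrix (g (F c1) c0) (g (F c2) c0) (g (F c3) c0)
     (g (F c2) c1) (g (F c3) c1) (g (F c3) c2)"

lemma frame_coords_F:
  assumes frame: "g_orthonormal g c0 c1 c2 c3"
  shows "frame_coords c0 c1 c2 c3 (F x) = frame_matrix c0 c1 c2 c3 *v frame_coords c0 c1 c2 c3 x"
proof -
  have image: "g (F x) c = - (- g x c0 * g (F c) c0 + g x c1 * g (F c) c1 + g x c2 * g (F c) c2
      + g x c3 * g (F c) c3)" for c
    using g_F_right[of x c] g_frame_expansion[OF frame, of x "F c"] by simp
  show ?thesis
    unfolding vec_eq_iff forall_4
    by (simp add: frame_coords_def frame_matrix_def lorentz_skew_matrix_def matrix_vector_mult_def
        sum_4 image[of c0] image[of c1] image[of c2] image[of c3] frame_entries[OF frame] algebra_simps)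
qed

lemma F_in_frame:
  assumes frame: "g_orthonormal g c0 c1 c2 c3"
  shows "F x = frame_combination c0 c1 c2 c3 (frame_matrix c0 c1 c2 c3 *v frame_coords c0 c1 c2 c3 x)"
  using frame_combination_coords[OF frame, of "F x"] by (simp add: frame_coords_F[OF frame])

lemma trace_det_frame_matrix:
  assumes frame: "g_orthonormal g c0 c1 c2 c3"
  defines "A \<equiv> frame_matrix c0 c1 c2 c3"
  shows "trace (matrix F ** matrix F) = trace (A ** A)" and "det (matrix F) = det A"
proof -
  define P where "P = frame_combination c0 c1 c2 c3"
  define Q where "Q = frame_coords c0 c1 c2 c3"
  have "linear P" "linear Q"
    unfolding P_def Q_def by (rule linear_frame_combination linear_frame_coords)+
  have "F = P \<circ> (\<lambda>\<xi>. A *v \<xi>) \<circ> Q"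
    by (rule ext) (simp add: P_def Q_def A_def F_in_frame[OF frame])
  moreover have "linear (P \<circ> (\<lambda>\<xi>. A *v \<xi>))"
    using \<open>linear P\<close> by (simp add: linear_compose)
  ultimately have matrix_F: "matrix F = matrix P ** A ** matrix Q"
    using \<open>linear P\<close> \<open>linear Q\<close> by (simp add: matrix_compose)
  have "Q \<circ> P = id"
    by (rule ext) (simp add: P_def Q_def frame_coords_combination[OF frame])
  then have inverse: "matrix Q ** matrix P = mat 1"
    using matrix_compose[OF \<open>linear P\<close> \<open>linear Q\<close>] by (simp add: matrix_id_mat_1)
  have "matrix F ** matrix F = matrix P ** A ** (matrix Q ** matrix P) ** A ** matrix Q"
    unfolding matrix_F by (simp only: matrix_mul_assoc)
  also have "\<dots> = matrix P ** (A ** A) ** matrix Q"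
    by (simp add: inverse matrix_mul_assoc)
  finally show "trace (matrix F ** matrix F) = trace (A ** A)"
    using trace_conjugate[OF inverse] by simp
  show "det (matrix F) = det A"
    using det_conjugate[OF inverse] matrix_F by simp
qed

lemma quartic_identity:
  "F (F (F (F x))) + (-(1/2) * trace (matrix F ** matrix F)) *\<^sub>R F (F x) + det (matrix F) *\<^sub>R x = 0"
  (is "?z = 0")
proof -
  obtain c0 c1 c2 c3 where frame: "g_orthonormal g c0 c1 c2 c3"
    using exists_orthonormal_frame by blast
  define Q where "Q = frame_coords c0 c1 c2 c3"
  define A where "A = frame_matrix c0 c1 c2 c3"
  note trace_det = trace_det_frame_matrix[OF frame, folded A_def]
  have quartic_A: "A ** A ** A ** A + (-(1/2) * trace (A ** A)) *\<^sub>R (A ** A) + det A *\<^sub>R mat 1 = 0"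
    by (rule lorentz_skew_matrix_quartic) (simp add: A_def frame_matrix_def)
  have Q_F: "Q (F y) = A *v Q y" for y
    by (simp add: Q_def A_def frame_coords_F[OF frame])
  note linear_Q = linear_frame_coords[of c0 c1 c2 c3, folded Q_def]
  have "Q ?z = (A ** A ** A ** A) *v Q x + (-(1/2) * trace (A ** A)) *\<^sub>R ((A ** A) *v Q x) + det A *\<^sub>R Q x"
    by (simp add: linear_add[OF linear_Q] linear_diff[OF linear_Q] linear_scale[OF linear_Q] Q_F
        trace_det matrix_vector_mul_assoc matrix_mul_assoc)
  also have "\<dots> = (A ** A ** A ** A + (-(1/2) * trace (A ** A)) *\<^sub>R (A ** A) + det A *\<^sub>R mat 1) *v Q x"
    by (simp add: matrix_vector_mult_add_rdistrib matrix_vector_mult_diff_rdistrib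
        scaleR_matrix_vector_assoc[symmetric])
  also have "\<dots> = 0"
    unfolding quartic_A by simp
  finally have "Q ?z = 0" .
  then show "?z = 0"
    using frame_combination_coords[OF frame, of ?z] linear_0[OF linear_frame_combination]
    by (simp add: Q_def)
qed

lemma exists_null_with_spacelike_image:
  assumes "F \<noteq> (\<lambda>x. 0)" and frame: "g_orthonormal g c0 c1 c2 c3"
  shows "\<exists>k. g k k = 0 \<and> g (F k) (F k) > 0 \<and> g k c3 = 0"
proof (rule ccontr)
  assume "\<not> ?thesis"
  then have image_not_spacelike: "g (F k) (F k) \<le> 0" if "g k k = 0" "g k c3 = 0" for k
    using that by force
  note frame_values = orthonormal_values[OF frame]
  define a b c d e f
    where "a = g (F c1) c0" and "b = g (F c2) c0" and "c = g (F c3) c0"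
      and "d = g (F c2) c1" and "e = g (F c3) c1" and "f = g (F c3) c2"
  note entries = frame_entries[OF frame, folded a_def b_def c_def d_def e_def f_def]
    a_def[symmetric] b_def[symmetric] c_def[symmetric] d_def[symmetric] e_def[symmetric] f_def[symmetric]
  have image_norm: "g (F y) (F y) = - (g (F y) c0)\<^sup>2 + (g (F y) c1)\<^sup>2 + (g (F y) c2)\<^sup>2 + (g (F y) c3)\<^sup>2"
    for y using g_frame_expansion[OF frame, of "F y" "F y"] by (simp add: power2_eq_square)
  txt \<open>The test vectors c0 +- c1 and c0 +- c2 are null and orthogonal to c3.\<close>
  have "(b + d)\<^sup>2 + (c + e)\<^sup>2 \<le> 0"
    using image_not_spacelike[of "c0 + c1"] image_norm[of "c0 + c1"]
    by (simp add: linear_add[OF linear_F] bilinear_simps frame_values entries power2_eq_square algebra_simps)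
  moreover have "(b - d)\<^sup>2 + (c - e)\<^sup>2 \<le> 0"
    using image_not_spacelike[of "c0 - c1"] image_norm[of "c0 - c1"]
    by (simp add: linear_diff[OF linear_F] bilinear_simps frame_values entries power2_eq_square algebra_simps)
  moreover have "(d - a)\<^sup>2 + (c + f)\<^sup>2 \<le> 0"
    using image_not_spacelike[of "c0 + c2"] image_norm[of "c0 + c2"]
    by (simp add: linear_add[OF linear_F] bilinear_simps frame_values entries power2_eq_square algebra_simps)
  moreover have "(d + a)\<^sup>2 + (c - f)\<^sup>2 \<le> 0"
    using image_not_spacelike[of "c0 - c2"] image_norm[of "c0 - c2"]
    by (simp add: linear_diff[OF linear_F] bilinear_simps frame_values entries power2_eq_square algebra_simps)
  ultimately have "a = 0 \<and> b = 0 \<and> c = 0 \<and> d = 0 \<and> e = 0 \<and> f = 0"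
    by (smt (verit) sum_power2_le_zero_iff)
  then have "frame_matrix c0 c1 c2 c3 = 0"
    by (simp add: frame_matrix_def lorentz_skew_matrix_def a_def b_def c_def d_def e_def f_def
        vec_eq_iff forall_4)
  then have "F x = 0" for x
    using linear_0[OF linear_frame_combination] by (simp add: F_in_frame[OF frame])
  with \<open>F \<noteq> (\<lambda>x. 0)\<close> show False
    by auto
qed

definition normalised_null :: "real^4 \<Rightarrow> bool" where
  "normalised_null k \<longleftrightarrow> g k k = 0 \<and> g (F k) (F k) = 4"

lemma exists_normalised_null:
  assumes "F \<noteq> (\<lambda>x. 0)" and "g_orthonormal g c0 c1 c2 c3"
  shows "\<exists>k. normalised_null k \<and> g k c3 = 0"
proof -
  obtain k where k: "g k k = 0" "g (F k) (F k) > 0" "g k c3 = 0"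
    using exists_null_with_spacelike_image[OF assms] by blast
  define s where "s = 2 / sqrt (g (F k) (F k))"
  have "g (F (s *\<^sub>R k)) (F (s *\<^sub>R k)) = 4"
    using k(2) by (simp add: s_def linear_scale[OF linear_F] bilinear_simps)
  then show ?thesis
    using k by (intro exI[of _ "s *\<^sub>R k"]) (simp add: normalised_null_def bilinear_simps)
qed

end

section \<open>The adapted basis\<close>

locale lorentz_skew_quartic = lorentz_skew +
  fixes \<sigma> \<tau> :: real
  assumes F_quartic: "F (F (F (F x))) = (\<tau> * \<tau> / 4) *\<^sub>R x - \<sigma> *\<^sub>R F (F x)"
begin

lemma null_orbit_gram:
  assumes "normalised_null k"
  shows "g k k = 0" "g (F k) (F k) = 4"
    "g k (F k) = 0" "g (F k) k = 0" "g k (F (F k)) = -4" "g (F (F k)) k = -4"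
    "g (F k) (F (F k)) = 0" "g (F (F k)) (F k) = 0" "g k (F (F (F k))) = 0" "g (F (F (F k))) k = 0"
    "g (F (F k)) (F (F k)) = 4 * \<sigma>"
    "g (F k) (F (F (F k))) = -4 * \<sigma>" "g (F (F (F k))) (F k) = -4 * \<sigma>"
    "g (F (F k)) (F (F (F k))) = 0" "g (F (F (F k))) (F (F k)) = 0"
    "g (F (F (F k))) (F (F (F k))) = 4 * \<sigma> * \<sigma> + \<tau> * \<tau>"
proof -
  show kk: "g k k = 0" and Fk: "g (F k) (F k) = 4"
    using assms unfolding normalised_null_def by simp_all
  show "g k (F k) = 0" "g (F k) k = 0"
    using g_F_right[of k k] g_F_self[of k] by simp_all
  show F2k_k: "g k (F (F k)) = -4" "g (F (F k)) k = -4"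
    using g_F_right[of k "F k"] g_F_swap[of "F k" k] Fk by simp_all
  show F2k_Fk: "g (F k) (F (F k)) = 0" "g (F (F k)) (F k) = 0"
    using g_F_right[of "F k" "F k"] g_F_self[of "F k"] by simp_all
  show "g k (F (F (F k))) = 0" "g (F (F (F k))) k = 0"
    using g_F_right[of k "F (F k)"] g_F_swap[of "F (F k)" k] F2k_Fk by simp_all
  have "g (F (F (F (F k)))) k = 4 * \<sigma>"
    unfolding F_quartic by (simp add: bilinear_simps kk F2k_k)
  then show F2k_F2k: "g (F (F k)) (F (F k)) = 4 * \<sigma>"
    using g_F_swap[of "F k" "F (F k)"] g_F_right[of "F (F (F k))" k] by simp
  show F3k_Fk: "g (F k) (F (F (F k))) = -4 * \<sigma>" "g (F (F (F k))) (F k) = -4 * \<sigma>"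
    using g_F_right[of "F k" "F (F k)"] g_F_swap[of "F (F k)" "F (F k)"] F2k_F2k g_commute
    by (simp_all add: g_F_self)
  show "g (F (F k)) (F (F (F k))) = 0" "g (F (F (F k))) (F (F k)) = 0"
    using g_F_right[of "F (F k)" "F (F k)"] g_F_self[of "F (F k)"] by simp_all
  have "g (F (F (F (F k)))) (F (F k)) = - (\<tau> * \<tau>) - 4 * \<sigma> * \<sigma>"
    unfolding F_quartic by (simp add: bilinear_simps F2k_F2k F2k_k)
  then show "g (F (F (F k))) (F (F (F k))) = 4 * \<sigma> * \<sigma> + \<tau> * \<tau>"
    using g_F_right[of "F (F (F k))" "F (F k)"] by simp
qed

definition frame_e0 :: "real^4 \<Rightarrow> real^4" where
  "frame_e0 k = (1/2 + \<sigma>/8) *\<^sub>R k + (1/4) *\<^sub>R F (F k)"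

definition frame_e1 :: "real^4 \<Rightarrow> real^4" where
  "frame_e1 k = (\<sigma>/8 - 1/2) *\<^sub>R k + (1/4) *\<^sub>R F (F k)"

definition frame_e2 :: "real^4 \<Rightarrow> real^4" where
  "frame_e2 k = (-1/2) *\<^sub>R F k"

definition admissible_e3 :: "real^4 \<Rightarrow> real^4 \<Rightarrow> bool" where
  "admissible_e3 k e \<longleftrightarrow> g e e = 1 \<and> g e k = 0 \<and> g e (F k) = 0 \<and> g e (F (F k)) = 0 \<and>
     \<tau> *\<^sub>R e = F (F (F k)) + \<sigma> *\<^sub>R F k"

lemma frame_e0_timelike:
  assumes "normalised_null k"
  shows "g (frame_e0 k) (frame_e0 k) = -1"
  by (simp add: frame_e0_def bilinear_simps null_orbit_gram[OF assms] algebra_simps)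

lemma frame_orthonormal:
  assumes "normalised_null k"
    and "g e e = 1" "g e k = 0" "g e (F k) = 0" "g e (F (F k)) = 0"
  shows "g_orthonormal g (frame_e0 k) (frame_e1 k) (frame_e2 k) e"
proof -
  have "g k e = 0" "g (F k) e = 0" "g (F (F k)) e = 0"
    using assms(3-) g_commute by metis+
  then show ?thesis
    using assms(2-) unfolding g_orthonormal_def frame_e0_def frame_e1_def frame_e2_def
    by (simp add: bilinear_simps null_orbit_gram[OF assms(1)] algebra_simps)
qed

lemma admissible_e3_if_tau_zero:
  assumes "\<tau> = 0" and k: "normalised_null k"
    and e: "g e e = 1" "g e k = 0" "g e (F k) = 0" "g e (F (F k)) = 0"
  shows "admissible_e3 k e"
proof -
  note frame = frame_orthonormal[OF k e]
  define w where "w = F (F (F k)) + \<sigma> *\<^sub>R F k"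
  have "g w (frame_e0 k) = 0" "g w (frame_e1 k) = 0" "g w (frame_e2 k) = 0"
    by (simp_all add: w_def frame_e0_def frame_e1_def frame_e2_def bilinear_simps
        null_orbit_gram[OF k] algebra_simps)
  moreover have "g w w = 0"
    using \<open>\<tau> = 0\<close> by (simp add: w_def bilinear_simps null_orbit_gram[OF k] algebra_simps)
  ultimately have "g w e = 0"
    using g_frame_expansion[OF frame, of w w] by simp
  with \<open>g w (frame_e0 k) = 0\<close> \<open>g w (frame_e1 k) = 0\<close> \<open>g w (frame_e2 k) = 0\<close> have "w = 0"
    by (rule orthogonal_to_frame_eq_0[OF frame])
  then show ?thesis
    unfolding admissible_e3_def using e \<open>\<tau> = 0\<close> by (simp add: w_def)
qed

lemma exists_admissible_e3:
  assumes k: "normalised_null k"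
  shows "\<exists>e. admissible_e3 k e"
proof (cases "\<tau> = 0")
  case True
  obtain x where x: "x \<noteq> 0" "g x k = 0" "g x (F k) = 0" "g x (F (F k)) = 0"
    using exists_nonzero_orthogonal by blast
  then have "g x (frame_e0 k) = 0"
    by (simp add: frame_e0_def bilinear_simps)
  then have "g x x > 0"
    using orthogonal_timelike_imp_spacelike[of "frame_e0 k" x] frame_e0_timelike[OF k] x(1) by simp
  then have "admissible_e3 k ((1 / sqrt (g x x)) *\<^sub>R x)"
    using x by (intro admissible_e3_if_tau_zero[OF True k]) (simp_all add: bilinear_simps)
  then show ?thesis ..
next
  case False
  define w where "w = F (F (F k)) + \<sigma> *\<^sub>R F k"
  have "g w w = \<tau> * \<tau>" "g w k = 0" "g w (F k) = 0" "g w (F (F k)) = 0"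
    by (simp_all add: w_def bilinear_simps null_orbit_gram[OF k] algebra_simps)
  with False have "admissible_e3 k ((1 / \<tau>) *\<^sub>R w)"
    by (simp add: admissible_e3_def bilinear_simps w_def)
  then show ?thesis ..
qed

lemma frame_normal_form:
  assumes k: "normalised_null k" and e: "admissible_e3 k e" and future: "future_directed g T (frame_e0 k)"
  shows "normal_form_basis g T F \<sigma> \<tau> (frame_e0 k) (frame_e1 k) (frame_e2 k) e"
proof -
  note F_simps = linear_add[OF linear_F] linear_diff[OF linear_F] linear_scale[OF linear_F]
    linear_neg[OF linear_F]
  have e_props: "g e e = 1" "g e k = 0" "g e (F k) = 0" "g e (F (F k)) = 0"
    and w: "F (F (F k)) + \<sigma> *\<^sub>R F k = \<tau> *\<^sub>R e"
    using e unfolding admissible_e3_def by simp_all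
  have tau_e: "(\<tau>/4) *\<^sub>R e = (1/4) *\<^sub>R (F (F (F k)) + \<sigma> *\<^sub>R F k)"
    unfolding w by simp
  note frame = frame_orthonormal[OF k e_props]
  have F_e0: "F (frame_e0 k) = (-1 + \<sigma>/4) *\<^sub>R frame_e2 k + (\<tau>/4) *\<^sub>R e"
    unfolding tau_e frame_e0_def frame_e2_def by (simp add: F_simps vec_eq_iff algebra_simps)
  have F_e1: "F (frame_e1 k) = (1 + \<sigma>/4) *\<^sub>R frame_e2 k + (\<tau>/4) *\<^sub>R e"
    unfolding tau_e frame_e1_def frame_e2_def by (simp add: F_simps vec_eq_iff algebra_simps)
  have F_e2: "F (frame_e2 k) = (-1 + \<sigma>/4) *\<^sub>R frame_e0 k - (1 + \<sigma>/4) *\<^sub>R frame_e1 k"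
    unfolding frame_e0_def frame_e1_def frame_e2_def by (simp add: F_simps vec_eq_iff algebra_simps)
  have "F e = (- g (F e) (frame_e0 k)) *\<^sub>R frame_e0 k + g (F e) (frame_e1 k) *\<^sub>R frame_e1 k
      + g (F e) (frame_e2 k) *\<^sub>R frame_e2 k + g (F e) e *\<^sub>R e"
    by (rule frame_expansion[OF frame])
  also have "\<dots> = (\<tau>/4) *\<^sub>R (frame_e0 k - frame_e1 k)"
  proof -
    note frame_values = orthonormal_values[OF frame]
    have "g (F e) (frame_e0 k) = - (\<tau>/4)" "g (F e) (frame_e1 k) = - (\<tau>/4)"
      "g (F e) (frame_e2 k) = 0" "g (F e) e = 0"
      using g_F_right[of e "frame_e0 k"] g_F_right[of e "frame_e1 k"] g_F_right[of e "frame_e2 k"]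
      by (simp_all add: F_e0 F_e1 F_e2 g_F_self bilinear_simps frame_values)
    then show ?thesis
      by (simp add: algebra_simps)
  qed
  finally show ?thesis
    using frame future F_e0 F_e1 F_e2 unfolding normal_form_basis_def by blast
qed

lemma frame_e0_neg: "frame_e0 (- k) = - frame_e0 k"
  by (simp add: frame_e0_def linear_neg[OF linear_F])

lemma normalised_null_neg: "normalised_null (- k) \<longleftrightarrow> normalised_null k"
  by (simp add: normalised_null_def linear_neg[OF linear_F] bilinear_simps)

lemma exists_future_normalised_null:
  assumes "g T T < 0" and k: "normalised_null k"
  shows "\<exists>k'. (k' = k \<or> k' = - k) \<and> normalised_null k' \<and> future_directed g T (frame_e0 k')"
proof -
  have "g (frame_e0 k) T \<noteq> 0"
    using timelike_not_orthogonal[OF assms(1)] frame_e0_timelike[OF k] by simp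
  then have "future_directed g T (frame_e0 k) \<or> future_directed g T (frame_e0 (- k))"
    using frame_e0_timelike[OF k] unfolding future_directed_def frame_e0_neg
    by (simp add: bilinear_simps linorder_neq_iff)
  then show ?thesis
    using k normalised_null_neg by blast
qed

lemma normal_form_basis_exists:
  assumes "g T T < 0" and "F \<noteq> (\<lambda>x. 0)"
  shows "\<exists>e0 e1 e2 e3. normal_form_basis g T F \<sigma> \<tau> e0 e1 e2 e3"
proof -
  obtain c0 c1 c2 c3 where "g_orthonormal g c0 c1 c2 c3"
    using exists_orthonormal_frame by blast
  then obtain k where "normalised_null k"
    using exists_normalised_null[OF assms(2)] by blast
  then obtain k' where k': "normalised_null k'" "future_directed g T (frame_e0 k')"
    using exists_future_normalised_null[OF assms(1)] by blast
  moreover obtain e where "admissible_e3 k' e"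
    using exists_admissible_e3[OF k'(1)] by blast
  ultimately show ?thesis
    using frame_normal_form by blast
qed

lemma normal_form_basis_exists_for_kernel_vector:
  assumes "g T T < 0" and "F \<noteq> (\<lambda>x. 0)" and "\<tau> = 0" and u: "g u u = 1" "F u = 0"
  shows "\<exists>e0 e1 e2. normal_form_basis g T F \<sigma> \<tau> e0 e1 e2 u"
proof -
  obtain c0 c1 c2 where "g_orthonormal g c0 c1 c2 u"
    using unit_spacelike_extends_to_frame[OF u(1)] by blast
  then obtain k where "normalised_null k" "g k u = 0"
    using exists_normalised_null[OF assms(2)] by blast
  then obtain k' where k': "normalised_null k'" "future_directed g T (frame_e0 k')" "k' = k \<or> k' = - k"
    using exists_future_normalised_null[OF assms(1)] by blast
  have "g u k' = 0"
    using k'(3) \<open>g k u = 0\<close> g_commute[of u k] by (auto simp: bilinear_simps)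
  have "admissible_e3 k' u"
    using g_F_right[of u k'] g_F_right[of u "F k'"] \<open>g u k' = 0\<close> u
    by (intro admissible_e3_if_tau_zero[OF \<open>\<tau> = 0\<close> k'(1)]) (simp_all add: bilinear_simps)
  then show ?thesis
    using frame_normal_form k' by blast
qed

end

lemma lorentz_skew_if_lorentzian:
  assumes "lorentzian g" and "skew_wrt g F"
  shows "lorentz_skew g F"
  using assms unfolding lorentzian_def
  by unfold_locales auto

theorem proposition2p2:
  fixes g :: "real^4 \<Rightarrow> real^4 \<Rightarrow> real"
    and T :: "real^4"
    and F :: "real^4 \<Rightarrow> real^4"
    and \<tau> :: real
  assumes "lorentzian g"
    and "g T T < 0"
    and "skew_wrt g F"
    and "F \<noteq> (\<lambda>x. 0)"
    and "\<tau> \<ge> 0"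
    and "\<tau>^2 = -4 * det (matrix F)"
  shows "(\<exists>e0 e1 e2 e3. normal_form_basis g T F (-(1/2) * trace (matrix F ** matrix F)) \<tau> e0 e1 e2 e3)
     \<and> (\<tau> = 0 \<longrightarrow> (\<forall>u. g u u = 1 \<and> F u = 0 \<longrightarrow>
          (\<exists>e0 e1 e2. normal_form_basis g T F (-(1/2) * trace (matrix F ** matrix F)) \<tau> e0 e1 e2 u)))"
proof -
  define \<sigma> where "\<sigma> = -(1/2) * trace (matrix F ** matrix F)"
  interpret lorentz_skew g F
    using lorentz_skew_if_lorentzian[OF assms(1,3)] .
  have "det (matrix F) = - (\<tau> * \<tau> / 4)"
    using assms(6) by (simp add: power2_eq_square)
  then have "F (F (F (F x))) + \<sigma> *\<^sub>R F (F x) - (\<tau> * \<tau> / 4) *\<^sub>R x = 0" for x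
    using quartic_identity[of x] by (simp add: \<sigma>_def)
  then interpret lorentz_skew_quartic g F \<sigma> \<tau>
    by unfold_locales (simp add: eq_diff_eq' algebra_simps)
  show ?thesis
    using normal_form_basis_exists[OF assms(2,4)] normal_form_basis_exists_for_kernel_vector[OF assms(2,4)]
    unfolding \<sigma>_def by blast
qed

end
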